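(* Assume $l=-\infty$, $r=\infty$, and that there exists $y_0\in I$ with $G_{y_0}(a)<\infty$ for all $a>0$. Then for every $y\in I$, $G_y$ is a bijection from $[0,\infty)$ onto $[0,\infty)$.
   Context: Let $-\infty\le l<r\le\infty$, $I=(l,r)$, $\eta\colon\mathbb R\to\mathbb R$ Borel with $\eta\ne0$ on $I$, $1/\eta^2\in L^1_{\mathrm{loc}}(I)$, $\eta=0$ off $I$. For $y\in I$, $x\in\mathbb R$, $q(y,x)=\int_y^x\int_y^u\frac{2}{\eta^2(z)}\,dz\,du\in[0,\infty]$. Let $\mu\ne\delta_0$ be a centered probability measure on $\mathbb R$ with finite first moment. For $y\in I$, $a\ge0$, $G_y(a)=\int_{\mathbb R} q(y,y+ax)\,\mu(dx)\in[0,\infty]$. *)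

theory Defs
  imports "HOL-Probability.Probability"
begin

text \<open>The scale function q(y,x) = int_y^x int_y^u 2/eta(z)^2 dz du in [0,infinity].
  For x < y both orientations flip, so the value is the nonnegative
  integral over the unoriented intervals.\<close>
definition qfun :: "(real \<Rightarrow> real) \<Rightarrow> real \<Rightarrow> real \<Rightarrow> ennreal" where
  "qfun \<eta> y x =
     (\<integral>\<^sup>+ u \<in> {min y x..max y x}.
        (\<integral>\<^sup>+ z \<in> {min y u..max y u}. ennreal (2 / (\<eta> z)\<^sup>2) \<partial>lborel) \<partial>lborel)"

definition Gfun :: "(real \<Rightarrow> real) \<Rightarrow> real measure \<Rightarrow> real \<Rightarrow> real \<Rightarrow> ennreal" where
  "Gfun \<eta> \<mu> y a = (\<integral>\<^sup>+ x. qfun \<eta> y (y + a * x) \<partial>\<mu>)"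

end

theory Submission
  imports Defs
begin

(* Put h = 2 / eta^2, let H be a primitive of h and Q a primitive of H.
   Since h > 0 is locally integrable, H is continuous and strictly increasing, so Q is
   differentiable with strictly increasing derivative, and the scale function is the
   Bregman divergence of Q:  q(y,x) = Q x - Q y - H y * (x - y).
   Hence G_y(a) is the mu-average of a -> D_y(y + a x), where D_y = bregman Q H y is
   convex, nonnegative and strictly increasing along every ray leaving y.  Averaging,
   G_y is convex with G_y(0) = 0, and strictly increasing wherever it is finite as soon
   as mu is not the Dirac mass at 0.  Finiteness of G_{y0} propagates to every base
   point y by convexity of D_{y0} and the finite first moment of mu. *)


section \<open>Bregman divergence of a function with strictly increasing derivative\<close>

definition bregman :: "(real \<Rightarrow> real) \<Rightarrow> (real \<Rightarrow> real) \<Rightarrow> real \<Rightarrow> real \<Rightarrow> real" where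
  "bregman Q H y x = Q x - Q y - H y * (x - y)"

locale bregman_generator =
  fixes Q H :: "real \<Rightarrow> real"
  assumes Q_deriv: "\<And>t. (Q has_real_derivative H t) (at t)"
    and H_strict_mono: "\<And>s t. s < t \<Longrightarrow> H s < H t"
begin

lemma bregman_deriv: "(bregman Q H y has_real_derivative (H x - H y)) (at x)"
  unfolding bregman_def by (auto intro!: derivative_eq_intros Q_deriv)

lemma bregman_convex: "convex_on UNIV (bregman Q H y)"
proof (rule convex_on_realI[where f' = "\<lambda>x. H x - H y"])
  show "\<And>x z. x \<le> z \<Longrightarrow> H x - H y \<le> H z - H y"
    using H_strict_mono by (metis diff_right_mono order_le_less)
qed (use bregman_deriv in auto)

text \<open>Along a ray leaving the base point the divergence strictly increases: by the mean
  value theorem its slope is (H(y + s x) - H y) x, which is positive.\<close>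
lemma bregman_ray_strict:
  assumes "0 \<le> a" "a < b" "x \<noteq> 0"
  shows "bregman Q H y (y + a * x) < bregman Q H y (y + b * x)"
proof -
  have "((\<lambda>s. bregman Q H y (y + s * x)) has_real_derivative (H (y + s * x) - H y) * x) (at s)"
    for s by (rule DERIV_chain2[OF bregman_deriv]) (auto intro!: derivative_eq_intros)
  then obtain s where s: "a < s" "s < b"
    and mvt: "bregman Q H y (y + b * x) - bregman Q H y (y + a * x) = (b - a) * ((H (y + s * x) - H y) * x)"
    using MVT2[OF \<open>a < b\<close>, of "\<lambda>s. bregman Q H y (y + s * x)" "\<lambda>s. (H (y + s * x) - H y) * x"]
    by blast
  have "0 < (H (y + s * x) - H y) * x"
  proof (cases "x > 0")
    case True
    then have "H y < H (y + s * x)" using s assms by (intro H_strict_mono) simp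
    then show ?thesis using True by simp
  next
    case False
    then have "x < 0" using assms by simp
    then have "H (y + s * x) < H y" using s assms by (intro H_strict_mono) (simp add: mult_pos_neg)
    then show ?thesis using \<open>x < 0\<close> by (simp add: mult_neg_neg)
  qed
  then show ?thesis using mvt \<open>a < b\<close> by (smt (verit) mult_pos_pos)
qed

lemma bregman_ray_mono:
  assumes "0 \<le> a" "a \<le> b"
  shows "bregman Q H y (y + a * x) \<le> bregman Q H y (y + b * x)"
  using bregman_ray_strict[of a b x y] assms by (cases "x = 0 \<or> a = b") auto

lemma bregman_nonneg: "0 \<le> bregman Q H y x"
  using bregman_ray_mono[of 0 1 y "x - y"] by (simp add: bregman_def)

lemma bregman_ray_measurable:
  assumes "sets M = sets borel"
  shows "(\<lambda>x. ennreal (bregman Q H y (y + a * x))) \<in> borel_measurable M"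
proof -
  have "isCont (\<lambda>x. bregman Q H y (y + a * x)) x" for x
    by (rule DERIV_isCont, rule DERIV_chain2[OF bregman_deriv]) (auto intro!: derivative_eq_intros)
  then have "(\<lambda>x. bregman Q H y (y + a * x)) \<in> borel_measurable borel"
    by (intro borel_measurable_continuous_onI continuous_at_imp_continuous_on) auto
  then have "(\<lambda>x. ennreal (bregman Q H y (y + a * x))) \<in> borel_measurable borel"
    by measurable
  then show ?thesis using measurable_cong_sets[OF assms refl] by blast
qed

text \<open>Moving the base point from y0 to y: writing y + a x as the midpoint of
  y0 + 2 a x and 2 y - y0, convexity of the divergence based at y0 bounds the
  divergence based at y by half of the doubled ray at y0 plus an affine error.\<close>
lemma bregman_base_change:
  assumes "0 \<le> a"
  shows "bregman Q H y (y + a * x) \<le> bregman Q H y0 (y0 + (2 * a) * x) / 2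
           + bregman Q H y0 (2 * y - y0) / 2 + \<bar>H y0 - H y\<bar> * a * \<bar>x\<bar>"
proof -
  have shift: "bregman Q H y (y + a * x)
      = bregman Q H y0 (y + a * x) - bregman Q H y0 y + (H y0 - H y) * (a * x)"
    by (simp add: bregman_def algebra_simps)
  have "bregman Q H y0 ((1 - 1/2) *\<^sub>R (y0 + (2 * a) * x) + (1/2) *\<^sub>R (2 * y - y0))
      \<le> (1 - 1/2) * bregman Q H y0 (y0 + (2 * a) * x) + (1/2) * bregman Q H y0 (2 * y - y0)"
    by (rule convex_onD[OF bregman_convex]) auto
  moreover have "(1 - 1/2) *\<^sub>R (y0 + (2 * a) * x) + (1/2) *\<^sub>R (2 * y - y0) = y + a * x"
    by (simp add: algebra_simps)
  moreover have "(H y0 - H y) * (a * x) \<le> \<bar>H y0 - H y\<bar> * a * \<bar>x\<bar>"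
    using assms by (metis abs_ge_self abs_mult abs_of_nonneg mult.assoc)
  ultimately show ?thesis using shift bregman_nonneg[of y0 y] by simp
qed

end


section \<open>Convex increasing functions on the half-line\<close>

text \<open>A convex, strictly increasing function on [0,oo) vanishing at 0 is a bijection
  of [0,oo): convexity makes it grow at least linearly and continuous in the interior.\<close>
lemma convex_strict_mono_bij_nonneg:
  fixes g :: "real \<Rightarrow> real"
  assumes cvx: "convex_on {0..} g" and g0: "g 0 = 0"
    and strict: "\<And>a b. 0 \<le> a \<Longrightarrow> a < b \<Longrightarrow> g a < g b"
  shows "bij_betw g {0..} {0..}"
proof -
  have mid: "g ((1 - t) * a + t * b) \<le> (1 - t) * g a + t * g b"
    if "0 \<le> a" "0 \<le> b" "0 \<le> t" "t \<le> 1" for a b t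
    using convex_onD[OF cvx, of t a b] that by simp
  have below: "g a \<le> a * g 1" if "0 \<le> a" "a \<le> 1" for a
    using mid[of 0 1 a] that g0 by simp
  have above: "A * g 1 \<le> g A" if "1 \<le> A" for A
  proof -
    have "g 1 \<le> g A / A" using mid[of 0 A "1/A"] that g0 by simp
    then show ?thesis using that by (simp add: field_simps)
  qed
  have cont: "continuous_on {0<..} g"
    by (rule convex_on_continuous) (auto intro: convex_on_subset[OF cvx])
  have g1: "0 < g 1" using strict[of 0 1] g0 by simp
  have hit: "\<exists>a\<ge>0. g a = t" if "0 < t" for t
  proof -
    define e where "e = min 1 (t / (2 * g 1))"
    define A where "A = max 1 (t / g 1 + 1)"
    have e: "0 < e" "e \<le> 1" using that g1 by (auto simp: e_def)
    then have "e \<le> A" by (simp add: A_def)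
    have "g e \<le> e * g 1" using below e by simp
    also have "\<dots> \<le> t" using g1 that by (simp add: e_def min_def field_simps)
    finally have "g e \<le> t" .
    have "t \<le> A * g 1" using g1 by (simp add: A_def max_def field_simps)
    also have "\<dots> \<le> g A" by (rule above) (simp add: A_def)
    finally have "t \<le> g A" .
    have "continuous_on {e..A} g"
      by (rule continuous_on_subset[OF cont]) (use e in auto)
    then obtain a where "e \<le> a" "g a = t"
      using IVT'[of g e t A] \<open>g e \<le> t\<close> \<open>t \<le> g A\<close> \<open>e \<le> A\<close> by blast
    then show ?thesis using e by (intro exI[of _ a]) auto
  qed
  have "inj_on g {0..}"
    by (rule strict_mono_on_imp_inj_on) (auto intro: strict_mono_onI strict)
  moreover have "g ` {0..} = {0..}"
  proof
    show "g ` {0..} \<subseteq> {0..}"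
      using strict g0 by (force simp: le_less)
    show "{0..} \<subseteq> g ` {0..}"
      using hit g0 by (force simp: le_less)
  qed
  ultimately show ?thesis by (simp add: bij_betw_def)
qed

lemma bij_betw_ennreal_of_real_part:
  fixes f :: "real \<Rightarrow> ennreal"
  assumes fin: "\<And>a. 0 \<le> a \<Longrightarrow> f a < \<infinity>"
    and bij: "bij_betw (\<lambda>a. enn2real (f a)) {0..} {0..}"
  shows "bij_betw f {0..} {x. x < \<infinity>}"
proof -
  have "bij_betw ennreal {0::real..} {x. x < \<infinity>}"
  proof (rule bij_betwI')
    show "\<And>x. x \<in> {x. x < \<infinity>} \<Longrightarrow> \<exists>r\<in>{0..}. x = ennreal r"
      by (metis atLeast_iff ennreal_cases ennreal_less_top less_irrefl mem_Collect_eq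
          infinity_ennreal_def)
  qed auto
  from bij_betw_trans[OF bij this] show ?thesis
    by (rule bij_betw_cong[THEN iffD1, rotated]) (use fin in \<open>auto simp: less_top\<close>)
qed


section \<open>Averaging the divergence along rays\<close>

lemma ennreal_lincomb:
  fixes s t u v :: real
  assumes "0 \<le> s" "0 \<le> t" "0 \<le> u" "0 \<le> v"
  shows "ennreal (s * u + t * v) = ennreal s * ennreal u + ennreal t * ennreal v"
  using assms by (simp add: ennreal_mult)

definition bregman_avg ::
    "(real \<Rightarrow> real) \<Rightarrow> (real \<Rightarrow> real) \<Rightarrow> real measure \<Rightarrow> real \<Rightarrow> real \<Rightarrow> ennreal" where
  "bregman_avg Q H \<mu> y a = (\<integral>\<^sup>+ x. ennreal (bregman Q H y (y + a * x)) \<partial>\<mu>)"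

lemma bregman_avg_zero: "bregman_avg Q H \<mu> y 0 = 0"
  by (simp add: bregman_avg_def bregman_def)

lemma prob_space_AE_zero_eq_return:
  assumes "prob_space \<mu>" and sets: "sets \<mu> = sets borel" and ae: "AE x in \<mu>. x = (0::real)"
  shows "\<mu> = return borel 0"
proof (rule measure_eqI)
  fix A assume A: "A \<in> sets \<mu>"
  have "emeasure \<mu> A = (\<integral>\<^sup>+ x. indicator A x \<partial>\<mu>)" using A by simp
  also have "\<dots> = (\<integral>\<^sup>+ x. indicator A (0::real) \<partial>\<mu>)"
    by (rule nn_integral_cong_AE) (use ae in auto)
  also have "\<dots> = emeasure (return borel 0) A"
    using A sets prob_space.emeasure_space_1[OF assms(1)] by simp
  finally show "emeasure \<mu> A = emeasure (return borel 0) A" .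
qed (use sets in simp)

lemma nn_integral_affine_abs_finite:
  assumes "prob_space \<mu>" and "integrable \<mu> (\<lambda>x::real. x)" and "0 \<le> C" "0 \<le> K"
  shows "(\<integral>\<^sup>+ x. ennreal (C + K * \<bar>x\<bar>) \<partial>\<mu>) < \<infinity>"
proof -
  interpret prob_space \<mu> by fact
  have "integrable \<mu> (\<lambda>x. C + K * \<bar>x\<bar>)"
    using assms(2) by (intro Bochner_Integration.integrable_add integrable_mult_right) auto
  then show ?thesis
    using assms by (subst nn_integral_eq_integral) auto
qed

context bregman_generator
begin

lemma bregman_avg_finite:
  assumes "prob_space \<mu>" and sets: "sets \<mu> = sets borel" and "integrable \<mu> (\<lambda>x. x)"
    and y0: "\<forall>a>0. bregman_avg Q H \<mu> y0 a < \<infinity>" and a: "0 \<le> a"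
  shows "bregman_avg Q H \<mu> y a < \<infinity>"
proof -
  define C where "C = bregman Q H y0 (2 * y - y0) / 2"
  define K where "K = \<bar>H y0 - H y\<bar> * a"
  have CK: "0 \<le> C" "0 \<le> K" using a bregman_nonneg by (auto simp: C_def K_def)
  have bound: "ennreal (bregman Q H y (y + a * x))
      \<le> ennreal (1/2) * ennreal (bregman Q H y0 (y0 + (2 * a) * x)) + ennreal (C + K * \<bar>x\<bar>)" for x
  proof -
    have "bregman Q H y (y + a * x) \<le> 1/2 * bregman Q H y0 (y0 + (2 * a) * x) + (C + K * \<bar>x\<bar>)"
      using bregman_base_change[OF a, of y x y0] by (simp add: C_def K_def)
    then have "ennreal (bregman Q H y (y + a * x))
        \<le> ennreal (1/2 * bregman Q H y0 (y0 + (2 * a) * x) + (C + K * \<bar>x\<bar>))"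
      by (rule ennreal_leI)
    also have "\<dots> = ennreal (1/2) * ennreal (bregman Q H y0 (y0 + (2 * a) * x)) + ennreal (C + K * \<bar>x\<bar>)"
      using ennreal_lincomb[of "1/2" 1 "bregman Q H y0 (y0 + (2 * a) * x)" "C + K * \<bar>x\<bar>"]
        CK bregman_nonneg by simp
    finally show ?thesis .
  qed
  have "bregman_avg Q H \<mu> y a \<le> (\<integral>\<^sup>+ x. ennreal (1/2) * ennreal (bregman Q H y0 (y0 + (2 * a) * x))
      + ennreal (C + K * \<bar>x\<bar>) \<partial>\<mu>)"
    unfolding bregman_avg_def by (rule nn_integral_mono) (rule bound)
  also have "\<dots> = ennreal (1/2) * bregman_avg Q H \<mu> y0 (2 * a) + (\<integral>\<^sup>+ x. ennreal (C + K * \<bar>x\<bar>) \<partial>\<mu>)"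
  proof -
    have "(\<lambda>x::real. ennreal (C + K * \<bar>x\<bar>)) \<in> borel_measurable borel" by measurable
    then have "(\<lambda>x. ennreal (C + K * \<bar>x\<bar>)) \<in> borel_measurable \<mu>"
      using measurable_cong_sets[OF sets refl] by blast
    then show ?thesis unfolding bregman_avg_def
      by (subst nn_integral_add)
        (auto intro!: borel_measurable_times_ennreal bregman_ray_measurable[OF sets]
          simp: nn_integral_cmult bregman_ray_measurable[OF sets])
  qed
  also have "\<dots> < \<infinity>"
  proof -
    have "bregman_avg Q H \<mu> y0 (2 * a) < \<infinity>"
      using y0 a by (cases "a = 0") (auto simp: bregman_avg_zero)
    then have "ennreal (1/2) * bregman_avg Q H \<mu> y0 (2 * a) < \<infinity>"
      by (metis ennreal_less_top ennreal_mult_less_top infinity_ennreal_def)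
    then show ?thesis using nn_integral_affine_abs_finite[OF assms(1,3) CK] by simp
  qed
  finally show ?thesis .
qed

lemma bregman_avg_convex:
  assumes sets: "sets \<mu> = sets borel" and t: "0 \<le> t" "t \<le> 1"
  shows "bregman_avg Q H \<mu> y ((1 - t) * a + t * b)
      \<le> ennreal (1 - t) * bregman_avg Q H \<mu> y a + ennreal t * bregman_avg Q H \<mu> y b"
proof -
  have pt: "ennreal (bregman Q H y (y + ((1 - t) * a + t * b) * x))
      \<le> ennreal (1 - t) * ennreal (bregman Q H y (y + a * x)) + ennreal t * ennreal (bregman Q H y (y + b * x))"
    for x
  proof -
    have "bregman Q H y ((1 - t) *\<^sub>R (y + a * x) + t *\<^sub>R (y + b * x))
        \<le> (1 - t) * bregman Q H y (y + a * x) + t * bregman Q H y (y + b * x)"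
      by (rule convex_onD[OF bregman_convex]) (use t in auto)
    moreover have "(1 - t) *\<^sub>R (y + a * x) + t *\<^sub>R (y + b * x) = y + ((1 - t) * a + t * b) * x"
      by (simp add: algebra_simps)
    ultimately have "ennreal (bregman Q H y (y + ((1 - t) * a + t * b) * x))
        \<le> ennreal ((1 - t) * bregman Q H y (y + a * x) + t * bregman Q H y (y + b * x))"
      by (intro ennreal_leI) simp
    also have "\<dots> = ennreal (1 - t) * ennreal (bregman Q H y (y + a * x))
        + ennreal t * ennreal (bregman Q H y (y + b * x))"
      using t bregman_nonneg by (intro ennreal_lincomb) auto
    finally show ?thesis .
  qed
  have "bregman_avg Q H \<mu> y ((1 - t) * a + t * b) \<le> (\<integral>\<^sup>+ x. ennreal (1 - t) * ennreal (bregman Q H y (y + a * x))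
      + ennreal t * ennreal (bregman Q H y (y + b * x)) \<partial>\<mu>)"
    unfolding bregman_avg_def by (rule nn_integral_mono) (rule pt)
  also have "\<dots> = ennreal (1 - t) * bregman_avg Q H \<mu> y a + ennreal t * bregman_avg Q H \<mu> y b"
    unfolding bregman_avg_def
    by (subst nn_integral_add)
      (auto intro!: borel_measurable_times_ennreal simp: nn_integral_cmult bregman_ray_measurable[OF sets])
  finally show ?thesis .
qed

lemma bregman_avg_strict:
  assumes "prob_space \<mu>" and sets: "sets \<mu> = sets borel" and "\<mu> \<noteq> return borel 0"
    and fin: "bregman_avg Q H \<mu> y a < \<infinity>" and ab: "0 \<le> a" "a < b"
  shows "bregman_avg Q H \<mu> y a < bregman_avg Q H \<mu> y b"
  unfolding bregman_avg_def
proof (rule nn_integral_less)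
  show "AE x in \<mu>. ennreal (bregman Q H y (y + a * x)) \<le> ennreal (bregman Q H y (y + b * x))"
    using bregman_ray_mono ab by (auto intro!: ennreal_leI)
  show "\<not> (AE x in \<mu>. ennreal (bregman Q H y (y + b * x)) \<le> ennreal (bregman Q H y (y + a * x)))"
  proof
    assume "AE x in \<mu>. ennreal (bregman Q H y (y + b * x)) \<le> ennreal (bregman Q H y (y + a * x))"
    then have "AE x in \<mu>. x = 0"
      using bregman_ray_strict[OF ab] bregman_nonneg
      by (elim eventually_mono) (metis ennreal_le_iff leD)
    then show False using prob_space_AE_zero_eq_return assms(1-3) by blast
  qed
qed (use fin in \<open>auto simp: bregman_avg_def bregman_ray_measurable[OF sets]\<close>)

lemma bregman_avg_bij:
  assumes "prob_space \<mu>" and sets: "sets \<mu> = sets borel" and "integrable \<mu> (\<lambda>x. x)"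
    and "\<mu> \<noteq> return borel 0" and "\<forall>a>0. bregman_avg Q H \<mu> y0 a < \<infinity>"
  shows "bij_betw (bregman_avg Q H \<mu> y) {0..} {x. x < \<infinity>}"
proof (rule bij_betw_ennreal_of_real_part)
  let ?G = "bregman_avg Q H \<mu> y"
  show fin: "\<And>a. 0 \<le> a \<Longrightarrow> ?G a < \<infinity>"
    using bregman_avg_finite assms(1-3,5) by blast
  have "convex_on {0..} (\<lambda>a. enn2real (?G a))"
  proof (rule convex_onI)
    fix t a b :: real assume t: "0 < t" "t < 1" and ab: "a \<in> {0..}" "b \<in> {0..}"
    have "?G ((1 - t) * a + t * b) \<le> ennreal (1 - t) * ?G a + ennreal t * ?G b"
      by (rule bregman_avg_convex[OF sets]) (use t in auto)
    moreover have "ennreal (1 - t) * ?G a + ennreal t * ?G b < \<infinity>"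
      using fin ab by (simp add: ennreal_mult_less_top less_top)
    ultimately have "enn2real (?G ((1 - t) * a + t * b))
        \<le> enn2real (ennreal (1 - t) * ?G a + ennreal t * ?G b)"
      by (simp add: enn2real_mono)
    also have "\<dots> = (1 - t) * enn2real (?G a) + t * enn2real (?G b)"
      using t ab fin by (simp add: enn2real_plus enn2real_mult ennreal_mult_less_top less_top)
    finally show "enn2real (?G ((1 - t) *\<^sub>R a + t *\<^sub>R b)) \<le> (1 - t) * enn2real (?G a) + t * enn2real (?G b)"
      by simp
  qed (simp add: convex_real_interval)
  moreover have "enn2real (?G a) < enn2real (?G b)" if "0 \<le> a" "a < b" for a b
    using bregman_avg_strict[OF assms(1,2,4) fin that] fin[of b] that by (simp add: enn2real_less_iff)
  ultimately show "bij_betw (\<lambda>a. enn2real (?G a)) {0..} {0..}"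
    by (intro convex_strict_mono_bij_nonneg) (auto simp: bregman_avg_zero)
qed

end


section \<open>The scale function as a Bregman divergence\<close>

lemma set_nn_integral_interval_eq_integral:
  fixes g :: "real \<Rightarrow> real"
  assumes "g integrable_on {a..b}" and "\<And>z. z \<in> {a..b} \<Longrightarrow> 0 \<le> g z"
  shows "(\<integral>\<^sup>+ z\<in>{a..b}. ennreal (g z) \<partial>lborel) = ennreal (integral {a..b} g)"
proof -
  have "(\<integral>\<^sup>+ z\<in>{a..b}. ennreal (g z) \<partial>lborel) = (\<integral>\<^sup>+ z. ennreal (indicator {a..b} z * g z) \<partial>lborel)"
    by (rule nn_integral_cong) (auto split: split_indicator)
  also have "\<dots> = ennreal (integral {a..b} g)"
    using assms by (intro nn_integral_has_integral_lebesgue integrable_integral) auto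
  finally show ?thesis .
qed

definition primitive :: "(real \<Rightarrow> real) \<Rightarrow> real \<Rightarrow> real" where
  "primitive h t = (if 0 \<le> t then integral {0..t} h else - integral {t..0} h)"

lemma primitive_diff:
  assumes int: "\<And>a b. h integrable_on {a..b}" and ab: "a \<le> b"
  shows "primitive h b - primitive h a = integral {a..b} h"
proof -
  consider "0 \<le> a" | "a < 0" "0 \<le> b" | "b < 0" using ab by linarith
  then show ?thesis
  proof cases
    case 1
    then show ?thesis using Henstock_Kurzweil_Integration.integral_combine[where a=0 and c=a and b=b and f=h] ab int by (simp add: primitive_def)
  next
    case 2
    then show ?thesis using Henstock_Kurzweil_Integration.integral_combine[where a=a and c=0 and b=b and f=h] int by (simp add: primitive_def)
  next
    case 3
    then show ?thesis using Henstock_Kurzweil_Integration.integral_combine[where a=a and c=b and b=0 and f=h] ab int by (simp add: primitive_def)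
  qed
qed

lemma primitive_continuous:
  assumes int: "\<And>a b. h integrable_on {a..b}"
  shows "isCont (primitive h) t"
proof -
  have "continuous_on {t-1..t+1} (\<lambda>x. primitive h (t-1) + integral {t-1..x} h)"
    by (intro continuous_intros indefinite_integral_continuous_1 int)
  then have "continuous_on {t-1..t+1} (primitive h)"
    by (rule continuous_on_eq) (use primitive_diff[OF int] in force)
  then show ?thesis by (rule continuous_on_interior) simp
qed

lemma integral_pos_of_pos:
  fixes h :: "real \<Rightarrow> real"
  assumes [measurable]: "h \<in> borel_measurable borel" and pos: "\<And>z. 0 < h z"
    and int: "h integrable_on {a..b}" and "a < b"
  shows "0 < integral {a..b} h"
proof (rule ccontr)
  assume "\<not> 0 < integral {a..b} h"
  then have "(\<integral>\<^sup>+ z. ennreal (h z) * indicator {a..b} z \<partial>lborel) = 0"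
    using set_nn_integral_interval_eq_integral[OF int] pos by (simp add: less_imp_le ennreal_eq_0_iff)
  then have "AE z in lborel. ennreal (h z) * indicator {a..b} z = 0"
    by (subst (asm) nn_integral_0_iff_AE) auto
  then have "AE z in lborel. z \<notin> {a..b}"
    using pos by (elim eventually_mono) (auto simp: indicator_def less_le)
  then have "emeasure lborel {a..b} = 0"
    by (subst (asm) AE_iff_measurable[of "{a..b}"]) auto
  then show False using \<open>a < b\<close> by simp
qed

lemma exists_antiderivative:
  fixes H :: "real \<Rightarrow> real"
  assumes "\<And>t. isCont H t"
  shows "\<exists>Q. \<forall>t. (Q has_real_derivative H t) (at t)"
proof -
  obtain F where "\<forall>x::real. -\<infinity> < ereal x \<longrightarrow> ereal x < \<infinity> \<longrightarrow> (F has_vector_derivative H x) (at x)"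
    using einterval_antiderivative[of "-\<infinity>" "\<infinity>" H] assms by auto
  then show ?thesis by (auto simp: has_real_derivative_iff_has_vector_derivative)
qed

text \<open>Identification of the scale function: with H the primitive of h = 2 / eta^2 and
  Q a primitive of H, the inner integral equals |H u - H y| and the outer one is then
  computed by the fundamental theorem of calculus.\<close>
lemma qfun_eq_bregman:
  fixes \<eta> :: "real \<Rightarrow> real"
  defines "h \<equiv> \<lambda>z. 2 / (\<eta> z)\<^sup>2"
  assumes int: "\<And>a b. h integrable_on {a..b}"
    and gen: "bregman_generator Q (primitive h)"
  shows "qfun \<eta> y x = ennreal (bregman Q (primitive h) y x)"
proof -
  let ?H = "primitive h"
  interpret bregman_generator Q ?H by (fact gen)
  have inner: "(\<integral>\<^sup>+ z\<in>{min y u..max y u}. ennreal (h z) \<partial>lborel) = ennreal \<bar>?H u - ?H y\<bar>" for u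
  proof -
    have "integral {min y u..max y u} h = \<bar>?H u - ?H y\<bar>"
      using primitive_diff[OF int, of "min y u" "max y u"] H_strict_mono[of y u] H_strict_mono[of u y]
      by (cases y u rule: linorder_cases) (auto simp: min_def max_def)
    then show ?thesis
      by (subst set_nn_integral_interval_eq_integral[OF int]) (auto simp: h_def)
  qed
  have cont: "continuous_on {min y x..max y x} (\<lambda>u. \<bar>?H u - ?H y\<bar>)"
    by (intro continuous_intros continuous_at_imp_continuous_on ballI primitive_continuous int)
  have ftc: "((\<lambda>u. ?H u - ?H y) has_integral (bregman Q ?H y v - bregman Q ?H y w)) {w..v}" if "w \<le> v" for w v
    unfolding bregman_def
    by (rule fundamental_theorem_of_calculus[OF that])
      (auto simp: has_real_derivative_iff_has_vector_derivative[symmetric]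
        intro!: derivative_eq_intros Q_deriv[THEN DERIV_subset])
  have outer: "integral {min y x..max y x} (\<lambda>u. \<bar>?H u - ?H y\<bar>) = bregman Q ?H y x"
  proof (cases "y \<le> x")
    case True
    have "integral {y..x} (\<lambda>u. \<bar>?H u - ?H y\<bar>) = integral {y..x} (\<lambda>u. ?H u - ?H y)"
      by (rule integral_cong) (use H_strict_mono in \<open>force simp: le_less\<close>)
    then show ?thesis using True ftc[OF True] by (simp add: integral_unique bregman_def)
  next
    case False
    have "integral {x..y} (\<lambda>u. \<bar>?H u - ?H y\<bar>) = - integral {x..y} (\<lambda>u. ?H u - ?H y)"
      by (subst integral_neg[symmetric], rule integral_cong) (use H_strict_mono in \<open>force simp: le_less\<close>)
    then show ?thesis using False ftc[of x y] by (simp add: integral_unique bregman_def min_def max_def)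
  qed
  have "qfun \<eta> y x = (\<integral>\<^sup>+ u\<in>{min y x..max y x}. ennreal \<bar>?H u - ?H y\<bar> \<partial>lborel)"
    unfolding qfun_def using inner by (simp add: h_def)
  also have "\<dots> = ennreal (integral {min y x..max y x} (\<lambda>u. \<bar>?H u - ?H y\<bar>))"
    by (rule set_nn_integral_interval_eq_integral[OF integrable_continuous_interval[OF cont]]) simp
  finally show ?thesis unfolding outer .
qed

lemma qfun_bregman_representation:
  fixes \<eta> :: "real \<Rightarrow> real"
  assumes "\<eta> \<in> borel_measurable borel" and "\<And>z. \<eta> z \<noteq> 0"
    and "\<And>a b. set_integrable lborel {a..b} (\<lambda>z. 1 / (\<eta> z)\<^sup>2)"
  shows "\<exists>Q H. bregman_generator Q H \<and> (\<forall>y x. qfun \<eta> y x = ennreal (bregman Q H y x))"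
proof -
  define h where "h = (\<lambda>z. 2 / (\<eta> z)\<^sup>2)"
  have int: "h integrable_on {a..b}" for a b
    using integrable_cmul[OF set_borel_integral_eq_integral(1)[OF assms(3)], of 2]
    by (simp add: h_def)
  have meas: "h \<in> borel_measurable borel" unfolding h_def using assms(1) by measurable
  have pos: "0 < h z" for z unfolding h_def using assms(2) by simp
  have mono: "primitive h s < primitive h t" if "s < t" for s t
    using primitive_diff[OF int, of s t] integral_pos_of_pos[OF meas pos int that] that by simp
  obtain Q where "\<forall>t. (Q has_real_derivative primitive h t) (at t)"
    using exists_antiderivative[OF primitive_continuous[OF int]] by blast
  then have gen: "bregman_generator Q (primitive h)"
    using mono by unfold_locales auto
  show ?thesis
    using qfun_eq_bregman[of \<eta>, folded h_def, OF int gen] gen by blast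
qed


theorem mainTheorem3:
  fixes \<eta> :: "real \<Rightarrow> real" and \<mu> :: "real measure"
  assumes eta_borel: "\<eta> \<in> borel_measurable borel"
    and eta_nz: "\<And>z. \<eta> z \<noteq> 0"
    and eta_loc: "\<And>a b. set_integrable lborel {a..b} (\<lambda>z. 1 / (\<eta> z)\<^sup>2)"
    and mu_prob: "prob_space \<mu>"
    and mu_sets: "sets \<mu> = sets borel"
    and mu_int: "integrable \<mu> (\<lambda>x. x)"
    and mu_centered: "(\<integral>x. x \<partial>\<mu>) = 0"
    and mu_nondirac: "\<mu> \<noteq> return borel 0"
    and y0: "\<exists>y0. \<forall>a>0. Gfun \<eta> \<mu> y0 a < \<infinity>"
  shows "\<forall>y. bij_betw (Gfun \<eta> \<mu> y) {0::real..} {x::ennreal. x < \<infinity>}"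
proof -
  obtain Q H where gen: "bregman_generator Q H"
    and q: "\<And>y x. qfun \<eta> y x = ennreal (bregman Q H y x)"
    using qfun_bregman_representation[OF eta_borel eta_nz eta_loc] by blast
  have G: "Gfun \<eta> \<mu> y = bregman_avg Q H \<mu> y" for y
    by (simp add: fun_eq_iff Gfun_def bregman_avg_def q)
  obtain y0 where "\<forall>a>0. bregman_avg Q H \<mu> y0 a < \<infinity>"
    using y0 unfolding G by blast
  then show ?thesis
    unfolding G using bregman_generator.bregman_avg_bij[OF gen mu_prob mu_sets mu_int mu_nondirac]
    by blast
qed

end
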